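(* Let $G$ be a connected graph with no isolated vertices. If either (a) $\gamma_t(G)=\gamma_c(G)$, or (b) $\gamma_t(G)=\gamma_c(G)-1$, then $$\gamma_t(G) \ge \left\lceil \frac{3\gamma(G)+2\gamma_c(G)}{6}\right\rceil.$$
   Context: All graphs are finite, simple and undirected. A set $S\subseteq V(G)$ is a dominating set if every vertex not in $S$ is adjacent to some vertex of $S$; $\gamma(G)$ is the minimum size of a dominating set. A set $S$ is a total dominating set if every vertex of $G$ (including those in $S$) is adjacent to some vertex of $S$; $\gamma_t(G)$ is the minimum size of a total dominating set. A set $S$ is a connected dominating set if it is dominating and the subgraph induced by $S$ is connected; $\gamma_c(G)$ is the minimum size of a connected dominating set. *)

theory Defs
  imports Complex_Main
begin

definition simple_graph :: "'a set \<Rightarrow> ('a \<Rightarrow> 'a \<Rightarrow> bool) \<Rightarrow> bool" where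
  "simple_graph V E \<longleftrightarrow> finite V \<and> (\<forall>u v. E u v \<longrightarrow> E v u) \<and> (\<forall>u. \<not> E u u)
     \<and> (\<forall>u v. E u v \<longrightarrow> u \<in> V \<and> v \<in> V)"

definition connected_on :: "('a \<Rightarrow> 'a \<Rightarrow> bool) \<Rightarrow> 'a set \<Rightarrow> bool" where
  "connected_on E S \<longleftrightarrow> S \<noteq> {} \<and>
     (\<forall>u\<in>S. \<forall>v\<in>S. (\<lambda>x y. x \<in> S \<and> y \<in> S \<and> E x y)\<^sup>*\<^sup>* u v)"

definition no_isolated :: "'a set \<Rightarrow> ('a \<Rightarrow> 'a \<Rightarrow> bool) \<Rightarrow> bool" where
  "no_isolated V E \<longleftrightarrow> (\<forall>v\<in>V. \<exists>u\<in>V. E v u)"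

definition dominating :: "'a set \<Rightarrow> ('a \<Rightarrow> 'a \<Rightarrow> bool) \<Rightarrow> 'a set \<Rightarrow> bool" where
  "dominating V E S \<longleftrightarrow> S \<subseteq> V \<and> (\<forall>v\<in>V - S. \<exists>u\<in>S. E v u)"

definition total_dominating :: "'a set \<Rightarrow> ('a \<Rightarrow> 'a \<Rightarrow> bool) \<Rightarrow> 'a set \<Rightarrow> bool" where
  "total_dominating V E S \<longleftrightarrow> S \<subseteq> V \<and> (\<forall>v\<in>V. \<exists>u\<in>S. E v u)"

definition connected_dominating :: "'a set \<Rightarrow> ('a \<Rightarrow> 'a \<Rightarrow> bool) \<Rightarrow> 'a set \<Rightarrow> bool" where
  "connected_dominating V E S \<longleftrightarrow> dominating V E S \<and> connected_on E S"

definition domination_number :: "'a set \<Rightarrow> ('a \<Rightarrow> 'a \<Rightarrow> bool) \<Rightarrow> nat" where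
  "domination_number V E = Min {card S | S. dominating V E S}"

definition total_domination_number :: "'a set \<Rightarrow> ('a \<Rightarrow> 'a \<Rightarrow> bool) \<Rightarrow> nat" where
  "total_domination_number V E = Min {card S | S. total_dominating V E S}"

definition connected_domination_number :: "'a set \<Rightarrow> ('a \<Rightarrow> 'a \<Rightarrow> bool) \<Rightarrow> nat" where
  "connected_domination_number V E = Min {card S | S. connected_dominating V E S}"

end

theory Submission
  imports Defs
begin

text \<open>Every total dominating set is dominating, so \<open>\<gamma> \<le> \<gamma>\<^sub>t\<close>, and either hypothesis gives
\<open>\<gamma>\<^sub>c \<le> \<gamma>\<^sub>t + 1\<close>. Hence \<open>(3\<gamma> + 2\<gamma>\<^sub>c)/6 \<le> (5\<gamma>\<^sub>t + 2)/6\<close>, which is at most \<open>\<gamma>\<^sub>t\<close> as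
soon as \<open>\<gamma>\<^sub>t \<ge> 2\<close>; and a total dominating set has at least two vertices, since the vertex
dominating some \<open>v\<close> must itself be dominated by a different vertex.\<close>

lemma finite_cards_of_subsets:
  assumes "finite V" and "\<And>S. P S \<Longrightarrow> S \<subseteq> V"
  shows "finite {card S | S. P S}"
proof (rule finite_subset[of _ "{0..card V}"])
  show "{card S | S. P S} \<subseteq> {0..card V}"
    using assms card_mono by fastforce
qed simp

lemma total_dominating_imp_dominating:
  "total_dominating V E S \<Longrightarrow> dominating V E S"
  unfolding total_dominating_def dominating_def by blast

lemma total_dominating_vertex_set:
  "no_isolated V E \<Longrightarrow> total_dominating V E V"
  unfolding total_dominating_def no_isolated_def by blast

lemma domination_number_le_card:
  assumes "finite V" and "dominating V E S"
  shows "domination_number V E \<le> card S"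
proof -
  have "finite {card S | S. dominating V E S}"
    using assms(1) by (rule finite_cards_of_subsets) (simp add: dominating_def)
  then show ?thesis
    unfolding domination_number_def using assms(2) by (auto intro: Min_le)
qed

lemma total_domination_number_attained:
  assumes "finite V" and "no_isolated V E"
  obtains T where "total_dominating V E T" and "card T = total_domination_number V E"
proof -
  have "finite {card S | S. total_dominating V E S}"
    using assms(1) by (rule finite_cards_of_subsets) (simp add: total_dominating_def)
  moreover have "{card S | S. total_dominating V E S} \<noteq> {}"
    using total_dominating_vertex_set[OF assms(2)] by blast
  ultimately have "total_domination_number V E \<in> {card S | S. total_dominating V E S}"
    unfolding total_domination_number_def by (rule Min_in)
  then show ?thesis using that by force
qed

lemma card_total_dominating_ge_2:
  assumes "finite V" and "V \<noteq> {}" and "\<And>u. \<not> E u u" and T: "total_dominating V E T"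
  shows "2 \<le> card T"
proof -
  obtain v where "v \<in> V" using assms(2) by blast
  then obtain u where u: "u \<in> T" "E v u" using T unfolding total_dominating_def by blast
  then have "u \<in> V" using T unfolding total_dominating_def by blast
  then obtain w where w: "w \<in> T" "E u w" using T unfolding total_dominating_def by blast
  have "u \<noteq> w" using w(2) assms(3) by blast
  moreover have "finite T"
    using T assms(1) unfolding total_dominating_def by (meson finite_subset)
  ultimately show ?thesis
    using u(1) w(1) card_mono[of T "{u, w}"] by auto
qed

lemma domination_number_le_total_domination_number:
  assumes "finite V" and "no_isolated V E"
  shows "domination_number V E \<le> total_domination_number V E"
proof -
  obtain T where "total_dominating V E T" and "card T = total_domination_number V E"
    using assms by (rule total_domination_number_attained)
  then show ?thesis
    using assms(1) by (metis domination_number_le_card total_dominating_imp_dominating)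
qed

lemma total_domination_number_ge_2:
  assumes "simple_graph V E" and "V \<noteq> {}" and "no_isolated V E"
  shows "2 \<le> total_domination_number V E"
proof -
  have "finite V" and "\<And>u. \<not> E u u" using assms(1) unfolding simple_graph_def by blast+
  then show ?thesis
    using total_domination_number_attained card_total_dominating_ge_2 assms(2,3) by metis
qed

lemma ceiling_weighted_mean_le:
  fixes g c t :: nat
  assumes "g \<le> t" and "c \<le> t + 1" and "2 \<le> t"
  shows "\<lceil>(3 * real g + 2 * real c) / 6\<rceil> \<le> int t"
proof -
  have "(3 * real g + 2 * real c) / 6 \<le> real t"
    using assms by simp
  then show ?thesis by (simp add: ceiling_le_iff)
qed

text \<open>Connectedness of \<open>G\<close> is only used to know that \<open>V\<close> is nonempty.\<close>

theorem theorem2p8: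
  fixes V :: "'a set" and E :: "'a \<Rightarrow> 'a \<Rightarrow> bool"
  assumes "simple_graph V E"
    and "connected_on E V"
    and "no_isolated V E"
    and "total_domination_number V E = connected_domination_number V E
         \<or> total_domination_number V E + 1 = connected_domination_number V E"
  shows "int (total_domination_number V E) \<ge>
         \<lceil>(3 * real (domination_number V E) + 2 * real (connected_domination_number V E)) / 6\<rceil>"
proof (rule ceiling_weighted_mean_le)
  have "finite V" using assms(1) unfolding simple_graph_def by blast
  then show "domination_number V E \<le> total_domination_number V E"
    using assms(3) by (rule domination_number_le_total_domination_number)
  have "V \<noteq> {}" using assms(2) unfolding connected_on_def by blast
  then show "2 \<le> total_domination_number V E"
    using assms(1,3) by (intro total_domination_number_ge_2)
  show "connected_domination_number V E \<le> total_domination_number V E + 1"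
    using assms(4) by linarith
qed

end
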